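(* Let $\boldsymbol{M}$ be a weight sequence such that $\widetilde{\boldsymbol{M}}$ is almost increasing, and let $\boldsymbol{A}$ be either an almost increasing sequence, or a sequence such that $\liminf_{p\to\infty}A_p^{1/p}>0$ and $\widehat{\boldsymbol{A}}$ satisfies $\operatorname{(alg)}$. Then: (i) $\mathcal{F}\colon\mathcal{S}^{\{\widehat{\boldsymbol{A}}\}}_{\{\boldsymbol{M}\}}(\mathbb{R})\to\mathcal{S}^{\{\widetilde{\boldsymbol{M}}\}}_{\{\widehat{\boldsymbol{A}}\}}(\mathbb{R})$ is (well-defined and) continuous, and the same holds at the level of Banach spaces with a uniform scaling of $h$: there exists $a>0$ such that for every $h\ge1$, $\mathcal{F}$ maps $\mathcal{S}^{\widehat{\boldsymbol{A}},h}_{\boldsymbol{M},h}(\mathbb{R})$ continuously into $\mathcal{S}^{\widetilde{\boldsymbol{M}},ah}_{\widehat{\boldsymbol{A}},ah}(\mathbb{R})$. (ii) Statement (i) is also valid for $\mathcal{F}^{-1}$.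
   Context: Sequences are of positive reals indexed by $\mathbb{N}_0$; $m_p=M_{p+1}/M_p$. Weight sequence: $M_0=1$, $M_p^2\le M_{p-1}M_{p+1}$ ($p\ge1$), $m_p\to\infty$. $\widetilde{\boldsymbol{M}}=(\widetilde M_p)_p$ with $\widetilde M_p=M_{p+1}\log(e^2m_{p+1}/m_p)$. Almost increasing: $c_p\le ac_q$ for all $q\ge p$, some $a>0$. $\operatorname{(alg)}$ for $\boldsymbol{N}$: $N_pN_q\le C_1^{p+q}N_{p+q}$ for all $p,q$, some $C_1\ge1$. $\widehat{\boldsymbol{A}}=(p!A_p)_p$. For sequences $\boldsymbol{N},\boldsymbol{B}$ and $h>0$, $\mathcal{S}^{\boldsymbol{B},h}_{\boldsymbol{N},h}(\mathbb{R})$ is the Banach space of $\varphi\in C^\infty(\mathbb{R})$ with norm $\sup_{p,q}\sup_{x\in\mathbb{R}}|x^p\varphi^{(q)}(x)|/(h^{p+q}N_pB_q)$, and $\mathcal{S}^{\{\boldsymbol{B}\}}_{\{\boldsymbol{N}\}}(\mathbb{R})=\bigcup_h$ of these with inductive limit topology. $\mathcal{F}(\varphi)(\xi)=\int_{\mathbb{R}}\varphi(x)e^{ix\xi}\,dx$, $\mathcal{F}^{-1}(\varphi)(\xi)=\frac1{2\pi}\mathcal{F}(\varphi)(-\xi)$. *)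

theory Defs
  imports "HOL-Analysis.Analysis"
begin

definition quot_seq :: "(nat \<Rightarrow> real) \<Rightarrow> nat \<Rightarrow> real" where
  "quot_seq M p = M (Suc p) / M p"

definition weight_sequence :: "(nat \<Rightarrow> real) \<Rightarrow> bool" where
  "weight_sequence M \<longleftrightarrow> (\<forall>p. M p > 0) \<and> M 0 = 1 \<and>
     (\<forall>p\<ge>1. (M p)^2 \<le> M (p - 1) * M (p + 1)) \<and>
     filterlim (quot_seq M) at_top sequentially"

definition tilde_seq :: "(nat \<Rightarrow> real) \<Rightarrow> nat \<Rightarrow> real" where
  "tilde_seq M p = M (p + 1) * ln (exp 2 * quot_seq M (p + 1) / quot_seq M p)"

definition hat_seq :: "(nat \<Rightarrow> real) \<Rightarrow> nat \<Rightarrow> real" where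
  "hat_seq A p = fact p * A p"

definition almost_increasing :: "(nat \<Rightarrow> real) \<Rightarrow> bool" where
  "almost_increasing c \<longleftrightarrow> (\<exists>a>0. \<forall>p q. p \<le> q \<longrightarrow> c p \<le> a * c q)"

definition alg_cond :: "(nat \<Rightarrow> real) \<Rightarrow> bool" where
  "alg_cond N \<longleftrightarrow> (\<exists>C1\<ge>1. \<forall>p q. N p * N q \<le> C1 ^ (p + q) * N (p + q))"

fun iter_deriv :: "nat \<Rightarrow> (real \<Rightarrow> complex) \<Rightarrow> real \<Rightarrow> complex" where
  "iter_deriv 0 f = f"
| "iter_deriv (Suc n) f = (\<lambda>x. vector_derivative (iter_deriv n f) (at x))"

definition smooth_fun :: "(real \<Rightarrow> complex) \<Rightarrow> bool" where
  "smooth_fun f \<longleftrightarrow> (\<forall>n x. iter_deriv n f differentiable (at x))"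

definition S_vals :: "(nat \<Rightarrow> real) \<Rightarrow> (nat \<Rightarrow> real) \<Rightarrow> real \<Rightarrow> (real \<Rightarrow> complex) \<Rightarrow> real set" where
  "S_vals N B h \<phi> = {norm (complex_of_real (x ^ p) * iter_deriv q \<phi> x) / (h ^ (p + q) * N p * B q)
                     | p q x. True}"

text \<open>Membership in the Banach space S^{B,h}_{N,h}(R).\<close>
definition in_S :: "(nat \<Rightarrow> real) \<Rightarrow> (nat \<Rightarrow> real) \<Rightarrow> real \<Rightarrow> (real \<Rightarrow> complex) \<Rightarrow> bool" where
  "in_S N B h \<phi> \<longleftrightarrow> smooth_fun \<phi> \<and> bdd_above (S_vals N B h \<phi>)"

definition S_norm :: "(nat \<Rightarrow> real) \<Rightarrow> (nat \<Rightarrow> real) \<Rightarrow> real \<Rightarrow> (real \<Rightarrow> complex) \<Rightarrow> real" where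
  "S_norm N B h \<phi> = Sup (S_vals N B h \<phi>)"

definition in_S_Roumieu :: "(nat \<Rightarrow> real) \<Rightarrow> (nat \<Rightarrow> real) \<Rightarrow> (real \<Rightarrow> complex) \<Rightarrow> bool" where
  "in_S_Roumieu N B \<phi> \<longleftrightarrow> (\<exists>h>0. in_S N B h \<phi>)"

definition fourier :: "(real \<Rightarrow> complex) \<Rightarrow> real \<Rightarrow> complex" where
  "fourier \<phi> \<xi> = integral\<^sup>L lborel (\<lambda>x. \<phi> x * cis (x * \<xi>))"

definition inv_fourier :: "(real \<Rightarrow> complex) \<Rightarrow> real \<Rightarrow> complex" where
  "inv_fourier \<phi> \<xi> = fourier \<phi> (- \<xi>) / complex_of_real (2 * pi)"

text \<open>The conclusion of (i) for an operator T:
  T maps S^{B1}_{N1} into S^{B2}_{N2}, and there is a>0 such that for every h>=1,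
  T maps S^{B1,h}_{N1,h} into S^{B2,ah}_{N2,ah} continuously (bounded linear maps
  between normed spaces: a norm estimate with a constant C depending on h).\<close>
definition maps_continuously ::
  "((real \<Rightarrow> complex) \<Rightarrow> real \<Rightarrow> complex) \<Rightarrow> (nat \<Rightarrow> real) \<Rightarrow> (nat \<Rightarrow> real)
    \<Rightarrow> (nat \<Rightarrow> real) \<Rightarrow> (nat \<Rightarrow> real) \<Rightarrow> bool" where
  "maps_continuously T N1 B1 N2 B2 \<longleftrightarrow>
     (\<forall>\<phi>. in_S_Roumieu N1 B1 \<phi> \<longrightarrow> in_S_Roumieu N2 B2 (T \<phi>)) \<and>
     (\<exists>a>0. \<forall>h\<ge>1. \<exists>C. \<forall>\<phi>. in_S N1 B1 h \<phi> \<longrightarrow>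
        in_S N2 B2 (a * h) (T \<phi>) \<and> S_norm N2 B2 (a * h) (T \<phi>) \<le> C * S_norm N1 B1 h \<phi>)"

end

(*
  Write G_s phi (xi) = int phi(x) e^(i s x xi) dx, so that the Fourier transform is G_1 and its
  inverse is G_(-1) / (2 pi). Differentiating under the integral sign and integrating by parts,

    |xi^p (d/dxi)^q G_s phi (xi)| <= int |(d/dx)^p (x^q phi)(x)| dx   for |s| = 1,

  and the Leibniz rule (x g)^(p) = x g^(p) + p g^(p-1) reduces the right-hand side, by induction
  on q, to moments int |x|^j |phi^(p)(x)| dx. Such a moment is estimated by splitting the line at
  |x| = h m_j and |x| = h m_(j+1) and bounding phi^(p) with the weights M_j, M_(j+1), M_(j+2) on the
  three pieces: the outer pieces contribute h M_(j+1) each and the middle one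
  h M_(j+1) log(m_(j+1)/m_j), which together give the weight tilde M_j = M_(j+1) log(e^2 m_(j+1)/m_j). The induction produces
  running maxima of A and tilde M; they are absorbed since both sequences are almost increasing up
  to a geometric factor, which for A is where (alg) and liminf A_p^(1/p) > 0 come in.
*)

theory Submission
  imports Defs "HOL-Probability.Characteristic_Functions" "HOL-Probability.Sinc_Integral"
    "HOL-Real_Asymp.Real_Asymp"
begin

section \<open>Smooth functions and rapid decay\<close>

declare iter_deriv.simps(2)[simp del]

lemma iter_deriv_eqI:
  assumes "g 0 = f" and "\<And>n x. (g n has_vector_derivative g (Suc n) x) (at x)"
  shows "iter_deriv n f = g n"
proof (induction n)
  case 0
  then show ?case using assms(1) by simp
next
  case (Suc n)
  then show ?case using assms(2)[of n] by (auto simp: iter_deriv.simps(2) vector_derivative_at)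
qed

lemma smooth_funI:
  assumes "g 0 = f" and "\<And>n x. (g n has_vector_derivative g (Suc n) x) (at x)"
  shows "smooth_fun f"
  unfolding smooth_fun_def iter_deriv_eqI[OF assms] using assms(2) differentiableI_vector by blast

lemma smooth_fun_has_vector_derivative:
  assumes "smooth_fun f"
  shows "(iter_deriv n f has_vector_derivative iter_deriv (Suc n) f x) (at x)"
  using assms unfolding smooth_fun_def by (simp add: vector_derivative_works iter_deriv.simps(2))

lemma smooth_fun_continuous_on:
  assumes "smooth_fun f"
  shows "continuous_on UNIV (iter_deriv n f)"
  by (meson assms continuous_at_imp_continuous_on differentiable_imp_continuous_within smooth_fun_def)

lemma smooth_fun_cmult:
  assumes "smooth_fun f"
  shows "smooth_fun (\<lambda>x. c * f x)"
    and "iter_deriv n (\<lambda>x. c * f x) = (\<lambda>x. c * iter_deriv n f x)"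
proof -
  define g where "g n = (\<lambda>x. c * iter_deriv n f x)" for n
  have g0: "g 0 = (\<lambda>x. c * f x)" by (simp add: g_def)
  have gD: "(g n has_vector_derivative g (Suc n) x) (at x)" for n x
    unfolding g_def by (intro has_vector_derivative_mult_right smooth_fun_has_vector_derivative assms)
  show "smooth_fun (\<lambda>x. c * f x)" by (rule smooth_funI[OF g0 gD])
  show "iter_deriv n (\<lambda>x. c * f x) = (\<lambda>x. c * iter_deriv n f x)"
    using iter_deriv_eqI[OF g0 gD] by (simp add: g_def)
qed

definition times_x :: "(real \<Rightarrow> complex) \<Rightarrow> real \<Rightarrow> complex" where
  "times_x f = (\<lambda>x. of_real x * f x)"

lemma smooth_fun_times_x:
  assumes "smooth_fun f"
  shows "smooth_fun (times_x f)"
    and "iter_deriv n (times_x f)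
           = (\<lambda>x. of_real x * iter_deriv n f x + of_nat n * iter_deriv (n - 1) f x)"
proof -
  define g where "g n = (\<lambda>x. of_real x * iter_deriv n f x + of_nat n * iter_deriv (n - 1) f x)" for n
  have g0: "g 0 = times_x f" by (simp add: g_def times_x_def)
  have gD: "(g n has_vector_derivative g (Suc n) x) (at x)" for n x
  proof -
    have "((\<lambda>x. complex_of_real x) has_vector_derivative 1) (at x)"
      using has_vector_derivative_of_real[OF DERIV_ident] by simp
    then have "(g n has_vector_derivative
        (of_real x * iter_deriv (Suc n) f x + 1 * iter_deriv n f x)
          + of_nat n * iter_deriv (Suc (n - 1)) f x) (at x)"
      unfolding g_def
      by (intro has_vector_derivative_add has_vector_derivative_mult has_vector_derivative_mult_right
          smooth_fun_has_vector_derivative assms)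
    moreover have "(of_real x * iter_deriv (Suc n) f x + 1 * iter_deriv n f x)
        + of_nat n * iter_deriv (Suc (n - 1)) f x = g (Suc n) x"
      by (cases n) (simp_all add: g_def algebra_simps)
    ultimately show ?thesis by (rule has_vector_derivative_eq_rhs)
  qed
  show "smooth_fun (times_x f)" by (rule smooth_funI[OF g0 gD])
  show "iter_deriv n (times_x f) = g n" by (rule iter_deriv_eqI[OF g0 gD])
qed

lemma norm_iter_deriv_times_x_le:
  assumes "smooth_fun f"
  shows "norm (iter_deriv k (times_x f) x)
           \<le> \<bar>x\<bar> * norm (iter_deriv k f x) + real k * norm (iter_deriv (k - 1) f x)"
  unfolding smooth_fun_times_x(2)[OF assms]
  by (rule order_trans[OF norm_triangle_ineq]) (simp add: norm_mult)

definition rapidly_decreasing :: "(real \<Rightarrow> complex) \<Rightarrow> bool" where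
  "rapidly_decreasing f \<longleftrightarrow>
     smooth_fun f \<and> (\<forall>j k. \<exists>C. \<forall>x. \<bar>x\<bar>^j * norm (iter_deriv k f x) \<le> C)"

lemma rapidly_decreasing_smooth_fun: "rapidly_decreasing f \<Longrightarrow> smooth_fun f"
  by (simp add: rapidly_decreasing_def)

lemma rapidly_decreasing_times_x:
  assumes "rapidly_decreasing f"
  shows "rapidly_decreasing (times_x f)"
proof -
  have f: "smooth_fun f" using assms by (rule rapidly_decreasing_smooth_fun)
  have "\<exists>C. \<forall>x. \<bar>x\<bar>^j * norm (iter_deriv k (times_x f) x) \<le> C" for j k
  proof -
    obtain C1 where C1: "\<And>x. \<bar>x\<bar>^Suc j * norm (iter_deriv k f x) \<le> C1"
      using assms rapidly_decreasing_def by blast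
    obtain C2 where C2: "\<And>x. \<bar>x\<bar>^j * norm (iter_deriv (k - 1) f x) \<le> C2"
      using assms rapidly_decreasing_def by blast
    have "\<bar>x\<bar>^j * norm (iter_deriv k (times_x f) x) \<le> C1 + real k * C2" for x
    proof -
      have "\<bar>x\<bar>^j * norm (iter_deriv k (times_x f) x)
          \<le> \<bar>x\<bar>^j * (\<bar>x\<bar> * norm (iter_deriv k f x) + real k * norm (iter_deriv (k - 1) f x))"
        by (intro mult_left_mono norm_iter_deriv_times_x_le f) simp
      also have "\<dots> = \<bar>x\<bar>^Suc j * norm (iter_deriv k f x)
                      + real k * (\<bar>x\<bar>^j * norm (iter_deriv (k - 1) f x))"
        by (simp add: algebra_simps)
      also have "\<dots> \<le> C1 + real k * C2"
        by (intro add_mono C1 mult_left_mono C2) auto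
      finally show ?thesis .
    qed
    then show ?thesis by blast
  qed
  then show ?thesis using smooth_fun_times_x(1)[OF f] by (simp add: rapidly_decreasing_def)
qed

lemma rapidly_decreasing_funpow_times_x:
  "rapidly_decreasing f \<Longrightarrow> rapidly_decreasing ((times_x ^^ q) f)"
  by (induction q) (auto simp: rapidly_decreasing_times_x)

lemma integrable_bounded_by_inverse_1_plus_square:
  fixes f :: "real \<Rightarrow> 'a::{banach,second_countable_topology}"
  assumes "f \<in> borel_measurable borel" and "\<And>x. norm (f x) \<le> C / (1 + x^2)"
  shows "integrable lborel f"
proof (rule Bochner_Integration.integrable_bound)
  show "integrable lborel (\<lambda>x::real. C * inverse (1 + x^2))"
    using integrable_inverse_1_plus_square by (simp add: set_integrable_def)
  show "f \<in> borel_measurable lborel" using assms(1) by simp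
  have "norm (f x) \<le> norm (C * inverse (1 + x^2))" for x
  proof -
    have pos: "0 < 1 + x^2" by (simp add: add_pos_nonneg)
    have "0 \<le> C / (1 + x^2)" using assms(2)[of x] norm_ge_zero order_trans by blast
    then have "0 \<le> C" using pos by (simp add: zero_le_divide_iff)
    then show ?thesis using assms(2)[of x] pos by (simp add: divide_inverse abs_mult)
  qed
  then show "AE x in lborel. norm (f x) \<le> norm (C * inverse (1 + x^2))" by simp
qed

lemma rapidly_decreasing_decay:
  assumes "rapidly_decreasing f"
  obtains C where "\<And>x. \<bar>x\<bar>^j * norm (iter_deriv k f x) \<le> C / (1 + x^2)"
proof -
  obtain C0 where C0: "\<And>x. \<bar>x\<bar>^j * norm (iter_deriv k f x) \<le> C0"
    using assms rapidly_decreasing_def by blast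
  obtain C2 where C2: "\<And>x. \<bar>x\<bar>^(j+2) * norm (iter_deriv k f x) \<le> C2"
    using assms rapidly_decreasing_def by blast
  have "\<bar>x\<bar>^j * norm (iter_deriv k f x) \<le> (C0 + C2) / (1 + x^2)" for x
  proof -
    have "(1 + x^2) * (\<bar>x\<bar>^j * norm (iter_deriv k f x))
        = \<bar>x\<bar>^j * norm (iter_deriv k f x) + \<bar>x\<bar>^(j+2) * norm (iter_deriv k f x)"
      by (simp add: algebra_simps power_add power2_eq_square)
    also have "\<dots> \<le> C0 + C2" using C0 C2 by (rule add_mono)
    finally show ?thesis by (simp add: add_pos_nonneg le_divide_eq mult.commute)
  qed
  then show ?thesis by (rule that)
qed

lemma rapidly_decreasing_integrable:
  fixes g :: "real \<Rightarrow> 'a::{banach,second_countable_topology}"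
  assumes "rapidly_decreasing f" and "g \<in> borel_measurable borel"
    and "\<And>x. norm (g x) \<le> \<bar>x\<bar>^j * norm (iter_deriv k f x)"
  shows "integrable lborel g"
proof -
  obtain C where "\<And>x. \<bar>x\<bar>^j * norm (iter_deriv k f x) \<le> C / (1 + x^2)"
    using rapidly_decreasing_decay[OF assms(1)] by blast
  then show ?thesis
    using integrable_bounded_by_inverse_1_plus_square[OF assms(2)] assms(3) order_trans by blast
qed

lemma rapidly_decreasing_integrable_iter_deriv:
  assumes "rapidly_decreasing f"
  shows "integrable lborel (iter_deriv k f)"
  by (rule rapidly_decreasing_integrable[OF assms, of _ 0 k])
     (auto intro!: borel_measurable_continuous_onI smooth_fun_continuous_on
        rapidly_decreasing_smooth_fun assms)

lemma rapidly_decreasing_tendsto_0: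
  assumes "rapidly_decreasing f"
  shows "(iter_deriv k f \<longlongrightarrow> 0) at_top" and "(iter_deriv k f \<longlongrightarrow> 0) at_bot"
proof -
  obtain C where C: "\<And>x. \<bar>x\<bar>^0 * norm (iter_deriv k f x) \<le> C / (1 + x^2)"
    using rapidly_decreasing_decay[OF assms] by blast
  have bound: "\<forall>\<^sub>F x in F. norm (iter_deriv k f x) \<le> C / (1 + x^2)" for F
    using C by simp
  have "((\<lambda>x::real. C / (1 + x^2)) \<longlongrightarrow> 0) at_top" by real_asymp
  then show "(iter_deriv k f \<longlongrightarrow> 0) at_top" by (rule Lim_null_comparison[OF bound])
  have "((\<lambda>x::real. C / (1 + x^2)) \<longlongrightarrow> 0) at_bot" by real_asymp
  then show "(iter_deriv k f \<longlongrightarrow> 0) at_bot" by (rule Lim_null_comparison[OF bound])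
qed

definition deriv_moment :: "nat \<Rightarrow> nat \<Rightarrow> (real \<Rightarrow> complex) \<Rightarrow> real" where
  "deriv_moment j k f = integral\<^sup>L lborel (\<lambda>x. \<bar>x\<bar>^j * norm (iter_deriv k f x))"

lemma integrable_deriv_moment:
  assumes "rapidly_decreasing f"
  shows "integrable lborel (\<lambda>x. \<bar>x\<bar>^j * norm (iter_deriv k f x))"
  by (rule rapidly_decreasing_integrable[OF assms, of _ j k])
     (auto intro!: borel_measurable_continuous_onI continuous_intros
        smooth_fun_continuous_on rapidly_decreasing_smooth_fun assms)

lemma deriv_moment_times_x_le:
  assumes "rapidly_decreasing g"
  shows "deriv_moment j p (times_x g) \<le> deriv_moment (Suc j) p g + real p * deriv_moment j (p - 1) g"
proof -
  have "deriv_moment j p (times_x g)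
     \<le> integral\<^sup>L lborel (\<lambda>x. \<bar>x\<bar>^Suc j * norm (iter_deriv p g x)
                              + real p * (\<bar>x\<bar>^j * norm (iter_deriv (p - 1) g x)))"
    unfolding deriv_moment_def
  proof (rule integral_mono)
    fix x
    have "\<bar>x\<bar>^j * norm (iter_deriv p (times_x g) x)
        \<le> \<bar>x\<bar>^j * (\<bar>x\<bar> * norm (iter_deriv p g x) + real p * norm (iter_deriv (p - 1) g x))"
      by (intro mult_left_mono norm_iter_deriv_times_x_le rapidly_decreasing_smooth_fun assms) simp
    then show "\<bar>x\<bar>^j * norm (iter_deriv p (times_x g) x)
        \<le> \<bar>x\<bar>^Suc j * norm (iter_deriv p g x) + real p * (\<bar>x\<bar>^j * norm (iter_deriv (p - 1) g x))"
      by (simp add: algebra_simps)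
  qed (intro integrable_deriv_moment rapidly_decreasing_times_x Bochner_Integration.integrable_add
         integrable_mult_right assms)+
  also have "\<dots> = deriv_moment (Suc j) p g + real p * deriv_moment j (p - 1) g"
    unfolding deriv_moment_def
    by (simp only: Bochner_Integration.integral_add integrable_deriv_moment[OF assms]
        integrable_mult_right integral_mult_right_zero)
  finally show ?thesis .
qed

section \<open>Fourier integrals\<close>

definition scaled_fourier :: "real \<Rightarrow> (real \<Rightarrow> complex) \<Rightarrow> real \<Rightarrow> complex" where
  "scaled_fourier s f \<xi> = integral\<^sup>L lborel (\<lambda>x. f x * cis (s * x * \<xi>))"

lemma integrable_mult_cis:
  assumes "integrable lborel f"
  shows "integrable lborel (\<lambda>x. f x * cis (s * x * \<xi>))"
proof (rule Bochner_Integration.integrable_bound[OF integrable_norm[OF assms]])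
  have "(\<lambda>x. cis (s * x * \<xi>)) \<in> borel_measurable borel"
    by (intro borel_measurable_continuous_onI continuous_intros)
  then show "(\<lambda>x. f x * cis (s * x * \<xi>)) \<in> borel_measurable lborel"
    using borel_measurable_integrable[OF assms] by (intro borel_measurable_times) simp_all
qed (simp add: norm_mult)

lemma has_vector_derivative_quadratic_remainder:
  fixes F :: "real \<Rightarrow> 'a::real_normed_vector"
  assumes "\<And>t. norm (F (x + t) - F x - t *\<^sub>R D) \<le> K * t^2"
  shows "(F has_vector_derivative D) (at x)"
  unfolding has_vector_derivative_def has_derivative_at_alt
proof (intro conjI allI impI)
  show "bounded_linear (\<lambda>t. t *\<^sub>R D)" by (rule bounded_linear_scaleR_left)
  fix e :: real assume e: "e > 0"
  show "\<exists>d>0. \<forall>y. norm (y - x) < d \<longrightarrow> norm (F y - F x - (y - x) *\<^sub>R D) \<le> e * norm (y - x)"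
  proof (intro exI[of _ "e / (\<bar>K\<bar> + 1)"] conjI allI impI)
    show "e / (\<bar>K\<bar> + 1) > 0" using e by simp
    fix y assume y: "norm (y - x) < e / (\<bar>K\<bar> + 1)"
    have "norm (F y - F x - (y - x) *\<^sub>R D) \<le> (\<bar>K\<bar> * \<bar>y - x\<bar>) * \<bar>y - x\<bar>"
    proof -
      have "K * (y - x)^2 \<le> \<bar>K\<bar> * (y - x)^2" by (simp add: mult_right_mono)
      then show ?thesis using assms[of "y - x"] by (simp add: power2_eq_square abs_mult_self_eq)
    qed
    also have "\<dots> \<le> e * \<bar>y - x\<bar>"
    proof (rule mult_right_mono)
      have "\<bar>K\<bar> * \<bar>y - x\<bar> \<le> (\<bar>K\<bar> + 1) * \<bar>y - x\<bar>" by (simp add: mult_right_mono)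
      also have "\<dots> \<le> e" using y by (simp add: pos_less_divide_eq mult.commute less_imp_le)
      finally show "\<bar>K\<bar> * \<bar>y - x\<bar> \<le> e" .
    qed simp
    finally show "norm (F y - F x - (y - x) *\<^sub>R D) \<le> e * norm (y - x)" by simp
  qed
qed

lemma norm_cis_minus_linear_le: "norm (cis a - 1 - \<i> * of_real a) \<le> a^2 / 2"
proof -
  have "norm (cis a - 1 - \<i> * of_real a) = norm (iexp a - (\<Sum>k \<le> 1. (\<i> * a)^k / fact k))"
    by (simp add: cis_conv_exp algebra_simps)
  also have "\<dots> \<le> \<bar>a\<bar>^2 / fact 2" using iexp_approx1[of a 1] by (simp add: numeral_2_eq_2)
  finally show ?thesis by (simp add: power2_abs)
qed

lemma scaled_fourier_has_vector_derivative:
  assumes f: "rapidly_decreasing f"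
  shows "(scaled_fourier s f has_vector_derivative \<i> * s * scaled_fourier s (times_x f) \<xi>) (at \<xi>)"
proof (rule has_vector_derivative_quadratic_remainder)
  fix t :: real
  have int: "integrable lborel (\<lambda>x. g x * cis (s * x * \<eta>))"
    if "rapidly_decreasing g" for g \<eta>
    using integrable_mult_cis[OF rapidly_decreasing_integrable_iter_deriv[OF that, of 0]] by simp
  define r where "r x = f x * cis (s * x * \<xi>) * (cis (s * x * t) - 1 - \<i> * of_real (s * x * t))" for x
  have r_eq: "r = (\<lambda>x. f x * cis (s * x * (\<xi> + t)) - f x * cis (s * x * \<xi>)
                      - (t * \<i> * s) * (times_x f x * cis (s * x * \<xi>)))"
    by (auto simp: r_def times_x_def algebra_simps cis_mult[symmetric])
  have "integral\<^sup>L lborel r = scaled_fourier s f (\<xi> + t) - scaled_fourier s f \<xi>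
      - (t * \<i> * s) * scaled_fourier s (times_x f) \<xi>"
    unfolding r_eq scaled_fourier_def
    using int[OF f, of "\<xi> + t"] int[OF f, of \<xi>] int[OF rapidly_decreasing_times_x[OF f], of \<xi>]
    by simp
  then have "scaled_fourier s f (\<xi> + t) - scaled_fourier s f \<xi>
      - t *\<^sub>R (\<i> * s * scaled_fourier s (times_x f) \<xi>) = integral\<^sup>L lborel r"
    by (simp add: scaleR_conv_of_real algebra_simps)
  also have "norm \<dots> \<le> integral\<^sup>L lborel (\<lambda>x. (s^2 * t^2 / 2) * (\<bar>x\<bar>^2 * norm (iter_deriv 0 f x)))"
  proof (rule Bochner_Integration.integral_norm_bound_integral)
    show "integrable lborel r"
      unfolding r_eq using int[OF f] int[OF rapidly_decreasing_times_x[OF f]]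
      by (intro Bochner_Integration.integrable_diff integrable_mult_right)
    show "integrable lborel (\<lambda>x. (s^2 * t^2 / 2) * (\<bar>x\<bar>^2 * norm (iter_deriv 0 f x)))"
      by (intro integrable_mult_right integrable_deriv_moment f)
    fix x
    have "norm (r x) \<le> norm (f x) * ((s * x * t)^2 / 2)"
      unfolding r_def norm_mult norm_cis mult_1_right
      by (intro mult_left_mono norm_cis_minus_linear_le) simp
    then show "norm (r x) \<le> (s^2 * t^2 / 2) * (\<bar>x\<bar>^2 * norm (iter_deriv 0 f x))"
      by (simp add: power_mult_distrib algebra_simps)
  qed
  also have "\<dots> = (s^2 / 2 * deriv_moment 2 0 f) * t^2"
    by (simp add: deriv_moment_def)
  finally show "norm (scaled_fourier s f (\<xi> + t) - scaled_fourier s f \<xi>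
      - t *\<^sub>R (\<i> * s * scaled_fourier s (times_x f) \<xi>)) \<le> (s^2 / 2 * deriv_moment 2 0 f) * t^2" .
qed

lemma smooth_fun_scaled_fourier:
  assumes f: "rapidly_decreasing f"
  shows "smooth_fun (scaled_fourier s f)"
    and "iter_deriv q (scaled_fourier s f) = (\<lambda>\<xi>. (\<i> * s)^q * scaled_fourier s ((times_x ^^ q) f) \<xi>)"
proof -
  define g where "g q = (\<lambda>\<xi>. (\<i> * s)^q * scaled_fourier s ((times_x ^^ q) f) \<xi>)" for q
  have g0: "g 0 = scaled_fourier s f" by (simp add: g_def)
  have gD: "(g n has_vector_derivative g (Suc n) \<xi>) (at \<xi>)" for n \<xi>
    unfolding g_def
    by (rule has_vector_derivative_eq_rhs[OF has_vector_derivative_mult_right[OF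
          scaled_fourier_has_vector_derivative[OF rapidly_decreasing_funpow_times_x[OF f]]]])
       simp
  show "smooth_fun (scaled_fourier s f)" by (rule smooth_funI[OF g0 gD])
  show "iter_deriv q (scaled_fourier s f) = g q" by (rule iter_deriv_eqI[OF g0 gD])
qed

lemma scaled_fourier_of_deriv:
  assumes d: "\<And>x. (\<psi> has_vector_derivative \<psi>' x) (at x)" and c: "continuous_on UNIV \<psi>'"
    and i1: "integrable lborel \<psi>" and i2: "integrable lborel \<psi>'"
    and l1: "(\<psi> \<longlongrightarrow> 0) at_top" and l2: "(\<psi> \<longlongrightarrow> 0) at_bot"
  shows "scaled_fourier s \<psi>' \<xi> = - (\<i> * s * \<xi>) * scaled_fourier s \<psi> \<xi>"
proof -
  let ?e = "\<lambda>x. cis (s * x * \<xi>)"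
  let ?F = "\<lambda>x. \<psi> x * ?e x"
  let ?f = "\<lambda>x. (\<i> * s * \<xi>) * (\<psi> x * ?e x) + \<psi>' x * ?e x"
  have e_deriv: "(?e has_vector_derivative (\<i> * s * \<xi> * ?e x)) (at x)" for x
    unfolding has_vector_derivative_def
    by (rule has_derivative_eq_rhs[OF has_derivative_cis[of "\<lambda>x. s * x * \<xi>" "\<lambda>t. s * t * \<xi>"]])
       (auto intro!: derivative_eq_intros simp: fun_eq_iff scaleR_conv_of_real)
  have dF: "(?F has_vector_derivative ?f x) (at x)" for x
    by (rule has_vector_derivative_eq_rhs[OF has_vector_derivative_mult[OF d e_deriv]])
       (simp add: algebra_simps)
  have cpsi: "continuous_on UNIV \<psi>"
    using d has_vector_derivative_continuous continuous_at_imp_continuous_on by blast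
  have cf: "isCont ?f x" for x
  proof -
    have "continuous_on UNIV ?f" by (intro continuous_intros cpsi c)
    then show ?thesis by (simp add: continuous_on_eq_continuous_at)
  qed
  have j1: "integrable lborel ?F" by (rule integrable_mult_cis[OF i1])
  have j2: "integrable lborel (\<lambda>x. \<psi>' x * ?e x)" by (rule integrable_mult_cis[OF i2])
  have lim: "(?F \<longlongrightarrow> 0) F" if "(\<psi> \<longlongrightarrow> 0) F" for F
    by (rule Lim_null_comparison[where g="\<lambda>x. norm (\<psi> x)"])
       (simp_all add: norm_mult tendsto_norm_zero that)
  have "(LBINT x=-\<infinity>..\<infinity>. ?f x) = 0 - 0"
  proof (rule interval_integral_FTC_integrable[where F="?F"])
    show "set_integrable lborel (einterval (-\<infinity>) \<infinity>) ?f"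
      using Bochner_Integration.integrable_add[OF integrable_mult_right[OF j1] j2]
      by (simp add: set_integrable_def)
    show "((?F \<circ> real_of_ereal) \<longlongrightarrow> 0) (at_right (-\<infinity>))"
      unfolding ereal_tendsto_simps1 using lim[OF l2] .
    show "((?F \<circ> real_of_ereal) \<longlongrightarrow> 0) (at_left \<infinity>)"
      unfolding ereal_tendsto_simps1 using lim[OF l1] .
  qed (auto intro: dF cf)
  moreover have "(LBINT x=-\<infinity>..\<infinity>. ?f x)
      = (\<i> * s * \<xi>) * scaled_fourier s \<psi> \<xi> + scaled_fourier s \<psi>' \<xi>"
    using j1 j2
    by (simp add: interval_lebesgue_integral_def set_lebesgue_integral_def scaled_fourier_def)
  ultimately show ?thesis by (simp add: algebra_simps eq_neg_iff_add_eq_0)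
qed

lemma norm_scaled_fourier_iter_deriv:
  assumes f: "rapidly_decreasing f" and s: "\<bar>s\<bar> = 1"
  shows "\<bar>\<xi>\<bar>^p * norm (scaled_fourier s f \<xi>) = norm (scaled_fourier s (iter_deriv p f) \<xi>)"
proof (induction p)
  case 0
  then show ?case by simp
next
  case (Suc p)
  have "scaled_fourier s (iter_deriv (Suc p) f) \<xi>
      = - (\<i> * s * \<xi>) * scaled_fourier s (iter_deriv p f) \<xi>"
  proof (rule scaled_fourier_of_deriv)
    show "(iter_deriv p f has_vector_derivative iter_deriv (Suc p) f x) (at x)" for x
      using smooth_fun_has_vector_derivative[OF rapidly_decreasing_smooth_fun[OF f]] .
  qed (simp_all add: smooth_fun_continuous_on rapidly_decreasing_smooth_fun
        rapidly_decreasing_integrable_iter_deriv rapidly_decreasing_tendsto_0 f)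
  then show ?case using Suc.IH s by (simp add: norm_mult abs_mult)
qed

lemma norm_scaled_fourier_le:
  assumes "integrable lborel f"
  shows "norm (scaled_fourier s f \<xi>) \<le> integral\<^sup>L lborel (\<lambda>x. norm (f x))"
  unfolding scaled_fourier_def
  by (rule Bochner_Integration.integral_norm_bound_integral)
     (simp_all add: integrable_mult_cis assms norm_mult)

lemma scaled_fourier_weighted_le_deriv_moment:
  assumes f: "rapidly_decreasing f" and s: "\<bar>s\<bar> = 1"
  shows "\<bar>\<xi>\<bar>^p * norm (iter_deriv q (scaled_fourier s f) \<xi>) \<le> deriv_moment 0 p ((times_x ^^ q) f)"
proof -
  have g: "rapidly_decreasing ((times_x ^^ q) f)" by (rule rapidly_decreasing_funpow_times_x[OF f])
  have "\<bar>\<xi>\<bar>^p * norm (iter_deriv q (scaled_fourier s f) \<xi>)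
      = \<bar>\<xi>\<bar>^p * norm (scaled_fourier s ((times_x ^^ q) f) \<xi>)"
    using s by (simp add: smooth_fun_scaled_fourier(2)[OF f] norm_mult norm_power)
  also have "\<dots> = norm (scaled_fourier s (iter_deriv p ((times_x ^^ q) f)) \<xi>)"
    by (rule norm_scaled_fourier_iter_deriv[OF g s])
  also have "\<dots> \<le> deriv_moment 0 p ((times_x ^^ q) f)"
    using norm_scaled_fourier_le[OF rapidly_decreasing_integrable_iter_deriv[OF g]]
    by (simp add: deriv_moment_def)
  finally show ?thesis .
qed

section \<open>Weight sequences and the spaces S\<close>

lemma weight_sequence_pos: "weight_sequence M \<Longrightarrow> M p > 0"
  by (simp add: weight_sequence_def)

lemma quot_seq_pos: "weight_sequence M \<Longrightarrow> quot_seq M p > 0"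
  by (simp add: quot_seq_def weight_sequence_pos)

lemma quot_seq_le_Suc:
  assumes "weight_sequence M"
  shows "quot_seq M p \<le> quot_seq M (Suc p)"
proof -
  have "M (Suc p) * M (Suc p) \<le> M (Suc (Suc p)) * M p"
    using assms unfolding weight_sequence_def
    by (metis Suc_eq_plus1 diff_Suc_1 le_add2 plus_1_eq_Suc power2_eq_square mult.commute)
  then show ?thesis
    using weight_sequence_pos[OF assms, of p] weight_sequence_pos[OF assms, of "Suc p"]
    by (simp add: quot_seq_def divide_le_eq le_divide_eq mult.commute)
qed

lemma tilde_seq_eq:
  assumes "weight_sequence M"
  shows "tilde_seq M p = M (Suc p) * (2 + ln (quot_seq M (Suc p) / quot_seq M p))"
  using quot_seq_pos[OF assms, of p] quot_seq_pos[OF assms, of "Suc p"]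
  by (simp add: tilde_seq_def ln_mult ln_div)

lemma tilde_seq_pos:
  assumes "weight_sequence M"
  shows "tilde_seq M p > 0"
proof -
  have "1 \<le> quot_seq M (Suc p) / quot_seq M p"
    using quot_seq_le_Suc[OF assms, of p] quot_seq_pos[OF assms, of p] by simp
  then have "0 \<le> ln (quot_seq M (Suc p) / quot_seq M p)" by simp
  then show ?thesis
    using tilde_seq_eq[OF assms, of p] weight_sequence_pos[OF assms, of "Suc p"] by simp
qed

lemma hat_seq_pos: "(\<And>p. A p > 0) \<Longrightarrow> hat_seq A p > 0"
  by (simp add: hat_seq_def)

lemma S_vals_le_S_norm:
  assumes "in_S N B h \<phi>"
  shows "norm (of_real (x ^ p) * iter_deriv q \<phi> x) / (h ^ (p + q) * N p * B q) \<le> S_norm N B h \<phi>"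
  unfolding S_norm_def
  by (rule cSup_upper) (use assms in \<open>auto simp: in_S_def S_vals_def\<close>)

lemma in_S_pointwise_le:
  assumes "in_S N B h \<phi>" and "N p > 0" "B q > 0" "h > 0"
  shows "\<bar>x\<bar>^p * norm (iter_deriv q \<phi> x) \<le> S_norm N B h \<phi> * (h ^ (p + q) * N p * B q)"
  using S_vals_le_S_norm[OF assms(1), of x p q] assms(2-)
  by (simp add: norm_mult norm_power power_abs divide_le_eq)

lemma S_norm_nonneg:
  assumes "in_S N B h \<phi>" and "N 0 > 0" "B 0 > 0" "h > 0"
  shows "0 \<le> S_norm N B h \<phi>"
proof -
  have "0 \<le> norm (of_real (0 ^ 0) * iter_deriv 0 \<phi> 0) / (h ^ (0 + 0) * N 0 * B 0)"
    using assms by simp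
  also have "\<dots> \<le> S_norm N B h \<phi>" by (rule S_vals_le_S_norm[OF assms(1)])
  finally show ?thesis .
qed

lemma in_S_rapidly_decreasing:
  assumes "in_S N B h \<phi>" and "\<And>p. N p > 0" "\<And>q. B q > 0" "h > 0"
  shows "rapidly_decreasing \<phi>"
proof -
  have "\<exists>C. \<forall>x. \<bar>x\<bar>^j * norm (iter_deriv k \<phi> x) \<le> C" for j k
    using in_S_pointwise_le[OF assms(1) assms(2,3,4)] by blast
  then show ?thesis using assms(1) by (simp add: in_S_def rapidly_decreasing_def)
qed

lemma in_S_S_norm_leI:
  assumes "\<And>p. N p > 0" "\<And>q. B q > 0" "h > 0" and "smooth_fun \<phi>"
    and bound: "\<And>p q x. \<bar>x\<bar>^p * norm (iter_deriv q \<phi> x) \<le> K * (h ^ (p + q) * N p * B q)"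
  shows "in_S N B h \<phi>" and "S_norm N B h \<phi> \<le> K"
proof -
  have le: "v \<le> K" if v: "v \<in> S_vals N B h \<phi>" for v
  proof -
    obtain p q x where "v = norm (of_real (x ^ p) * iter_deriv q \<phi> x) / (h ^ (p + q) * N p * B q)"
      using v unfolding S_vals_def by blast
    then show ?thesis
      using bound[of x p q] assms(1)[of p] assms(2)[of q] assms(3)
      by (simp add: norm_mult norm_power power_abs divide_le_eq)
  qed
  then show "in_S N B h \<phi>" using assms(4) by (auto simp: in_S_def bdd_above_def)
  show "S_norm N B h \<phi> \<le> K"
    unfolding S_norm_def by (rule cSup_least) (auto simp: S_vals_def le)
qed

lemma in_S_mono:
  assumes "\<And>p. N p > 0" "\<And>q. B q > 0" "0 < h" "h \<le> h'" and \<phi>: "in_S N B h \<phi>"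
  shows "in_S N B h' \<phi>"
proof (rule in_S_S_norm_leI(1))
  fix p q x
  have "h ^ (p + q) * N p * B q \<le> h' ^ (p + q) * N p * B q"
    using assms by (intro mult_right_mono power_mono) (auto intro: less_imp_le)
  then show "\<bar>x\<bar>^p * norm (iter_deriv q \<phi> x) \<le> S_norm N B h \<phi> * (h' ^ (p + q) * N p * B q)"
    using in_S_pointwise_le[OF \<phi> assms(1,2,3)] S_norm_nonneg[OF \<phi> assms(1,2,3)]
    by (meson mult_left_mono order_trans)
qed (use assms in_S_def in auto)

lemma maps_continuouslyI:
  assumes "\<And>p. N1 p > 0" "\<And>q. B1 q > 0" and "a > 0"
    and bound: "\<And>h. h \<ge> 1 \<Longrightarrow> \<exists>C. \<forall>\<phi>. in_S N1 B1 h \<phi> \<longrightarrow>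
        in_S N2 B2 (a * h) (T \<phi>) \<and> S_norm N2 B2 (a * h) (T \<phi>) \<le> C * S_norm N1 B1 h \<phi>"
  shows "maps_continuously T N1 B1 N2 B2"
  unfolding maps_continuously_def
proof (intro conjI allI impI)
  fix \<phi> assume "in_S_Roumieu N1 B1 \<phi>"
  then obtain h where h: "h > 0" "in_S N1 B1 h \<phi>" by (auto simp: in_S_Roumieu_def)
  have "in_S N1 B1 (max 1 h) \<phi>" by (rule in_S_mono[OF assms(1,2) h(1) _ h(2)]) simp
  then have "in_S N2 B2 (a * max 1 h) (T \<phi>)" using bound[of "max 1 h"] by auto
  moreover have "a * max 1 h > 0" using \<open>a > 0\<close> by simp
  ultimately show "in_S_Roumieu N2 B2 (T \<phi>)" unfolding in_S_Roumieu_def by blast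
qed (use assms in blast)

definition running_max :: "(nat \<Rightarrow> real) \<Rightarrow> nat \<Rightarrow> real" where
  "running_max c p = Max (c ` {..p})"

lemma running_max_ge: "i \<le> p \<Longrightarrow> c i \<le> running_max c p"
  unfolding running_max_def by (intro Max_ge) auto

lemma running_max_mono: "p \<le> p' \<Longrightarrow> running_max c p \<le> running_max c p'"
  unfolding running_max_def by (intro Max_mono) auto

lemma running_max_le: "(\<And>i. i \<le> p \<Longrightarrow> c i \<le> B) \<Longrightarrow> running_max c p \<le> B"
  unfolding running_max_def by (subst Max_le_iff) auto

lemma running_max_pos: "c p > 0 \<Longrightarrow> running_max c p > 0"
  using running_max_ge[of p p c] by simp

text \<open>Both hypotheses on A imply this weakening of almost increasingness, and it is all the
  estimates below need.\<close>
definition almost_increasing_geom :: "(nat \<Rightarrow> real) \<Rightarrow> bool" where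
  "almost_increasing_geom c \<longleftrightarrow> (\<exists>D>0. \<exists>L\<ge>1. \<forall>i p. i \<le> p \<longrightarrow> c i \<le> D * L^p * c p)"

lemma almost_increasing_imp_geom:
  assumes "almost_increasing c"
  shows "almost_increasing_geom c"
proof -
  obtain a where "a > 0" "\<forall>i p. i \<le> p \<longrightarrow> c i \<le> a * c p"
    using assms unfolding almost_increasing_def by blast
  then show ?thesis unfolding almost_increasing_geom_def by (intro exI[of _ a] exI[of _ 1]) auto
qed

lemma running_max_le_geom:
  assumes "almost_increasing_geom c"
  obtains D L where "0 < D" "1 \<le> L" "\<And>p. running_max c p \<le> D * L^p * c p"
  using assms unfolding almost_increasing_geom_def by (meson running_max_le)

lemma geometric_lower_bound_of_liminf_root:
  assumes pos: "\<And>p. A p > 0" and lim: "liminf (\<lambda>p. ereal (root p (A p))) > 0"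
  obtains e c where "0 < e" "0 < c" "c \<le> 1" "\<And>n. e * c^n \<le> A n"
proof -
  obtain c0 where c0: "0 < ereal c0" "ereal c0 < liminf (\<lambda>p. ereal (root p (A p)))"
    using ereal_dense2[OF lim] by blast
  obtain P where P: "\<And>p. P \<le> p \<Longrightarrow> c0 < root p (A p)"
    using less_LiminfD[OF c0(2)] by (auto simp: eventually_sequentially)
  define c where "c = min c0 1"
  have c: "0 < c" "c \<le> 1" using c0 by (auto simp: c_def)
  define P1 where "P1 = max P 1"
  have large: "c^n \<le> A n" if "P1 \<le> n" for n
  proof -
    have "c \<le> root n (A n)" using P[of n] that by (simp add: c_def P1_def)
    then have "c^n \<le> root n (A n) ^ n" using c by (intro power_mono) auto
    also have "\<dots> = A n" using that pos[of n] by (simp add: P1_def less_imp_le)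
    finally show ?thesis .
  qed
  define e where "e = min 1 (Min ((\<lambda>n. A n / c^n) ` {..P1}))"
  have e: "0 < e" "e \<le> 1" unfolding e_def using pos c by auto
  have "e * c^n \<le> A n" for n
  proof (cases "n \<le> P1")
    case True
    then have "e \<le> A n / c^n" unfolding e_def by (intro min.coboundedI2 Min_le) auto
    then show ?thesis using c by (simp add: le_divide_eq)
  next
    case False
    have "e * c^n \<le> c^n" using e c by (intro mult_left_le_one_le) auto
    then show ?thesis using large[of n] False by simp
  qed
  then show ?thesis using that e c by blast
qed

lemma almost_increasing_geom_of_alg_cond:
  assumes pos: "\<And>p. A p > 0" and lim: "liminf (\<lambda>p. ereal (root p (A p))) > 0"
    and alg: "alg_cond (hat_seq A)"
  shows "almost_increasing_geom A"
proof -
  obtain e c where ec: "0 < e" "0 < c" "c \<le> 1" "\<And>n. e * c^n \<le> A n"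
    using geometric_lower_bound_of_liminf_root[OF pos lim] by blast
  obtain C where C: "C \<ge> 1" "\<And>p q. hat_seq A p * hat_seq A q \<le> C ^ (p + q) * hat_seq A (p + q)"
    using alg unfolding alg_cond_def by blast
  have bound: "A i \<le> (1 / e) * (2 * C / c)^p * A p" if "i \<le> p" for i p
  proof -
    \<comment> \<open>(alg) for k + i = p gives A k * A i \<le> (2 C)^p * A p, and A k \<ge> e c^p\<close>
    define k where "k = p - i"
    have p: "p = k + i" using that by (simp add: k_def)
    have fact_p: "fact p = real (fact k * fact i * (p choose k))"
      using binomial_fact_lemma[of k p] p by (simp only: of_nat_eq_iff) simp
    have "fact k * fact i * (A k * A i) = hat_seq A k * hat_seq A i" by (simp add: hat_seq_def)
    also have "\<dots> \<le> C ^ p * hat_seq A p" using C(2)[of k i] p by simp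
    also have "\<dots> = fact k * fact i * (C ^ p * (real (p choose k) * A p))"
      unfolding hat_seq_def fact_p by simp
    finally have "fact k * fact i * (A k * A i)
        \<le> fact k * fact i * (C ^ p * (real (p choose k) * A p))" .
    then have "A k * A i \<le> C ^ p * (real (p choose k) * A p)"
      by (rule mult_left_le_imp_le) simp
    also have "\<dots> \<le> C ^ p * (2 ^ p * A p)"
      using binomial_le_pow2[of p k] pos[of p] C(1)
      by (intro mult_left_mono mult_right_mono) (simp_all flip: of_nat_le_iff)
    finally have upper: "A k * A i \<le> C ^ p * (2 ^ p * A p)" .
    have "e * c^p * A i \<le> e * c^k * A i"
      using ec p pos[of i] by (intro mult_right_mono mult_left_mono power_decreasing) auto
    also have "\<dots> \<le> A k * A i" using ec(4)[of k] pos[of i] by (intro mult_right_mono) auto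
    also note upper
    finally have "e * c^p * A i \<le> C ^ p * (2 ^ p * A p)" .
    then show ?thesis
      using ec by (simp add: field_simps power_divide power_mult_distrib)
  qed
  have "1 \<le> 2 * C / c" using C(1) ec by (simp add: field_simps)
  then have "\<exists>L\<ge>1. \<forall>i p. i \<le> p \<longrightarrow> A i \<le> (1 / e) * L^p * A p" using bound by blast
  then show ?thesis unfolding almost_increasing_geom_def using ec(1) by (intro exI[of _ "1 / e"]) simp
qed

section \<open>Moment estimates\<close>

lemma nn_integral_inverse_atLeastAtMost:
  assumes "0 < R0" "R0 \<le> R1" "0 \<le> Y"
  shows "(\<integral>\<^sup>+x. ennreal (Y / x) * indicator {R0..R1} x \<partial>lborel) = ennreal (Y * ln (R1 / R0))"
proof -
  have c: "continuous_on {R0..R1} (\<lambda>x. Y / x)"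
    using assms by (intro continuous_intros) auto
  have "integral\<^sup>L lborel (\<lambda>x. indicator {R0..R1} x *\<^sub>R (Y / x)) = Y * ln R1 - Y * ln R0"
  proof (rule integral_FTC_atLeastAtMost[OF assms(2) _ c])
    fix x assume "R0 \<le> x" "x \<le> R1"
    then have "x > 0" using assms by simp
    then show "((\<lambda>x. Y * ln x) has_vector_derivative Y / x) (at x within {R0..R1})"
      by (auto intro!: derivative_eq_intros
          simp: has_real_derivative_iff_has_vector_derivative[symmetric] field_simps)
  qed
  also have "\<dots> = Y * ln (R1 / R0)" using assms by (simp add: ln_div algebra_simps)
  finally have ftc: "integral\<^sup>L lborel (\<lambda>x. indicator {R0..R1} x *\<^sub>R (Y / x)) = Y * ln (R1 / R0)" .
  have "(\<integral>\<^sup>+x. ennreal (Y / x) * indicator {R0..R1} x \<partial>lborel)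
      = (\<integral>\<^sup>+x. ennreal (indicator {R0..R1} x *\<^sub>R (Y / x)) \<partial>lborel)"
    by (rule nn_integral_cong) (auto split: split_indicator)
  also have "\<dots> = ennreal (integral\<^sup>L lborel (\<lambda>x. indicator {R0..R1} x *\<^sub>R (Y / x)))"
  proof (rule nn_integral_eq_integral)
    show "integrable lborel (\<lambda>x. indicator {R0..R1} x *\<^sub>R (Y / x))"
      using borel_integrable_atLeastAtMost'[OF c] by (simp add: set_integrable_def)
    show "AE x in lborel. 0 \<le> indicator {R0..R1} x *\<^sub>R (Y / x)"
      using assms by (intro AE_I2) (auto split: split_indicator)
  qed
  finally show ?thesis using ftc by simp
qed

lemma nn_integral_inverse_square_atLeast:
  assumes "0 < R" "0 \<le> Y"
  shows "(\<integral>\<^sup>+x. ennreal (Y / x^2) * indicator {R..} x \<partial>lborel) = ennreal (Y / R)"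
proof -
  have "(\<integral>\<^sup>+x. ennreal (Y / x^2) * indicator {R..} x \<partial>lborel) = ennreal (0 - (- Y / R))"
  proof (rule nn_integral_FTC_atLeast[where F="\<lambda>x. - Y / x"])
    show "(\<lambda>x::real. Y / x^2) \<in> borel_measurable borel" by measurable
    fix x assume "R \<le> x"
    then have "x > 0" using assms by simp
    then show "((\<lambda>x. - Y / x) has_real_derivative Y / x^2) (at x)"
      by (auto intro!: derivative_eq_intros simp: field_simps power2_eq_square)
    show "0 \<le> Y / x^2" using assms by simp
  next
    show "((\<lambda>x::real. - Y / x) \<longlongrightarrow> 0) at_top" by real_asymp
  qed
  then show ?thesis by simp
qed

definition three_piece :: "real \<Rightarrow> real \<Rightarrow> real \<Rightarrow> real \<Rightarrow> real \<Rightarrow> real \<Rightarrow> ennreal" where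
  "three_piece Y0 Y1 Y2 R0 R1 x = ennreal Y0 * indicator {0..R0} x
     + ennreal (Y1 / x) * indicator {R0..R1} x + ennreal (Y2 / x^2) * indicator {R1..} x"

lemma three_piece_measurable [measurable]: "three_piece Y0 Y1 Y2 R0 R1 \<in> borel_measurable borel"
  unfolding three_piece_def[abs_def] by measurable

lemma nn_integral_three_piece:
  assumes R: "0 < R0" "R0 \<le> R1" and Y: "0 \<le> Y0" "0 \<le> Y1" "0 \<le> Y2"
  shows "(\<integral>\<^sup>+x. three_piece Y0 Y1 Y2 R0 R1 x \<partial>lborel)
           = ennreal (Y0 * R0 + Y1 * ln (R1 / R0) + Y2 / R1)"
proof -
  have "0 \<le> Y1 * ln (R1 / R0)" using R Y by simp
  then have "ennreal (Y0 * R0 + Y1 * ln (R1 / R0) + Y2 / R1)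
      = ennreal (Y0 * R0) + ennreal (Y1 * ln (R1 / R0)) + ennreal (Y2 / R1)"
    using R Y by (simp add: ennreal_plus)
  also have "\<dots> = (\<integral>\<^sup>+x. ennreal Y0 * indicator {0..R0} x \<partial>lborel)
      + (\<integral>\<^sup>+x. ennreal (Y1 / x) * indicator {R0..R1} x \<partial>lborel)
      + (\<integral>\<^sup>+x. ennreal (Y2 / x^2) * indicator {R1..} x \<partial>lborel)"
    using R Y by (simp add: nn_integral_inverse_atLeastAtMost nn_integral_inverse_square_atLeast
        nn_integral_cmult_indicator ennreal_mult)
  also have "\<dots> = (\<integral>\<^sup>+x. three_piece Y0 Y1 Y2 R0 R1 x \<partial>lborel)"
    by (simp add: three_piece_def nn_integral_add)
  finally show ?thesis by simp
qed

lemma le_three_piece_abs: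
  fixes u :: real
  assumes "0 \<le> u" "u \<le> Y0" "\<bar>x\<bar> * u \<le> Y1" "x^2 * u \<le> Y2" and R: "0 < R0" "R0 \<le> R1"
  shows "ennreal u \<le> three_piece Y0 Y1 Y2 R0 R1 \<bar>x\<bar>"
proof -
  have le_sum: "a \<le> a + b + c" "b \<le> a + b + c" "c \<le> a + b + c" for a b c :: ennreal
    by (auto intro: add_increasing add_increasing2)
  consider "\<bar>x\<bar> \<le> R0" | "R0 < \<bar>x\<bar>" "\<bar>x\<bar> \<le> R1" | "R1 < \<bar>x\<bar>" by linarith
  then show ?thesis
  proof cases
    case 1
    then have "ennreal u \<le> ennreal Y0 * indicator {0..R0} \<bar>x\<bar>"
      using assms by (simp add: ennreal_leI)
    then show ?thesis unfolding three_piece_def using le_sum(1) by (rule order_trans)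
  next
    case 2
    then have "u \<le> Y1 / \<bar>x\<bar>" using assms by (simp add: field_simps)
    then have "ennreal u \<le> ennreal (Y1 / \<bar>x\<bar>) * indicator {R0..R1} \<bar>x\<bar>"
      using 2 by (simp add: ennreal_leI)
    then show ?thesis unfolding three_piece_def using le_sum(2) by (rule order_trans)
  next
    case 3
    then have "u \<le> Y2 / \<bar>x\<bar>^2" using assms by (simp add: field_simps)
    then have "ennreal u \<le> ennreal (Y2 / \<bar>x\<bar>^2) * indicator {R1..} \<bar>x\<bar>"
      using 3 by (simp add: ennreal_leI)
    then show ?thesis unfolding three_piece_def using le_sum(3) by (rule order_trans)
  qed
qed

lemma integral_le_three_piece:
  fixes u :: "real \<Rightarrow> real"
  assumes u: "integrable lborel u" "\<And>x. 0 \<le> u x"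
    and b: "\<And>x. u x \<le> Y0" "\<And>x. \<bar>x\<bar> * u x \<le> Y1" "\<And>x. x^2 * u x \<le> Y2"
    and R: "0 < R0" "R0 \<le> R1"
  shows "integral\<^sup>L lborel u \<le> 2 * (Y0 * R0 + Y1 * ln (R1 / R0) + Y2 / R1)"
proof -
  let ?w = "three_piece Y0 Y1 Y2 R0 R1"
  define T where "T = Y0 * R0 + Y1 * ln (R1 / R0) + Y2 / R1"
  have Y: "0 \<le> Y0" "0 \<le> Y1" "0 \<le> Y2" using u(2)[of 0] b[of 0] by simp_all
  then have T: "0 \<le> T" using R by (simp add: T_def)
  have "ennreal (u x) \<le> ?w x + ?w (- x)" for x
  proof -
    have "ennreal (u x) \<le> ?w \<bar>x\<bar>" using u(2) b R by (rule le_three_piece_abs)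
    also have "?w \<bar>x\<bar> \<le> ?w x + ?w (- x)"
      by (cases "0 \<le> x") (auto intro: add_increasing add_increasing2)
    finally show ?thesis .
  qed
  then have "(\<integral>\<^sup>+x. ennreal (u x) \<partial>lborel) \<le> (\<integral>\<^sup>+x. ?w x \<partial>lborel) + (\<integral>\<^sup>+x. ?w (- x) \<partial>lborel)"
    by (subst nn_integral_add[symmetric]) (auto intro: nn_integral_mono)
  also have "(\<integral>\<^sup>+x. ?w (- x) \<partial>lborel) = (\<integral>\<^sup>+x. ?w x \<partial>lborel)"
    using nn_integral_real_affine[of ?w "-1" 0] by simp
  also have "(\<integral>\<^sup>+x. ?w x \<partial>lborel) = ennreal T"
    unfolding T_def by (rule nn_integral_three_piece[OF R Y])
  finally have "ennreal (integral\<^sup>L lborel u) \<le> ennreal (2 * T)"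
    using u T by (simp add: nn_integral_eq_integral ennreal_plus[symmetric])
  then show ?thesis using T by (simp add: T_def)
qed

lemma deriv_moment_le_tilde_seq:
  assumes M: "weight_sequence M" and B: "\<And>q. B q > 0" and h: "h > 0" and \<phi>: "in_S M B h \<phi>"
  shows "deriv_moment j k \<phi> \<le> 2 * S_norm M B h \<phi> * h^(j+k+1) * B k * tilde_seq M j"
proof -
  have Mpos: "\<And>p. M p > 0" using weight_sequence_pos[OF M] .
  define Q where "Q = S_norm M B h \<phi> * h^(j+k) * B k"
  have bound: "\<bar>x\<bar>^(j+i) * norm (iter_deriv k \<phi> x) \<le> Q * h^i * M (j+i)" for x i
    using in_S_pointwise_le[of M B h \<phi> "j+i" k x, OF \<phi> Mpos B h]
    by (simp add: Q_def power_add ac_simps)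
  \<comment> \<open>split points where the three bounds on the integrand cross\<close>
  define m0 m1 where "m0 = quot_seq M j" and "m1 = quot_seq M (Suc j)"
  have m: "0 < m0" "m0 \<le> m1"
    using quot_seq_pos[OF M] quot_seq_le_Suc[OF M] by (simp_all add: m0_def m1_def)
  have "deriv_moment j k \<phi> \<le> 2 * (Q * M j * (h * m0) + Q * h * M (j+1) * ln (h * m1 / (h * m0))
                                   + Q * h^2 * M (j+2) / (h * m1))"
    unfolding deriv_moment_def
  proof (rule integral_le_three_piece)
    show "integrable lborel (\<lambda>x. \<bar>x\<bar>^j * norm (iter_deriv k \<phi> x))"
      by (rule integrable_deriv_moment[OF in_S_rapidly_decreasing[OF \<phi> Mpos B h]])
    fix x
    show "\<bar>x\<bar>^j * norm (iter_deriv k \<phi> x) \<le> Q * M j" using bound[of x 0] by simp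
    show "\<bar>x\<bar> * (\<bar>x\<bar>^j * norm (iter_deriv k \<phi> x)) \<le> Q * h * M (j+1)"
      using bound[of x 1] by (simp add: ac_simps)
    have "x^2 * (\<bar>x\<bar>^j * norm (iter_deriv k \<phi> x)) = (\<bar>x\<bar>^2 * \<bar>x\<bar>^j) * norm (iter_deriv k \<phi> x)"
      by (simp only: power2_abs mult.assoc)
    also have "\<bar>x\<bar>^2 * \<bar>x\<bar>^j = \<bar>x\<bar>^(j+2)" by (simp only: power_add mult.commute)
    finally show "x^2 * (\<bar>x\<bar>^j * norm (iter_deriv k \<phi> x)) \<le> Q * h^2 * M (j+2)"
      using bound[of x 2] by (simp only:)
  qed (use h m in simp_all)
  also have "\<dots> = 2 * Q * h * tilde_seq M j"
  proof -
    have "M p \<noteq> 0" for p using Mpos[of p] by simp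
    then have "M j * m0 = M (Suc j)" "M (Suc j) * m1 = M (Suc (Suc j))"
      by (simp_all add: m0_def m1_def quot_seq_def)
    then show ?thesis
      using h m
      by (simp add: tilde_seq_eq[OF M] flip: m0_def m1_def) (simp add: field_simps power2_eq_square)
  qed
  also have "\<dots> = 2 * S_norm M B h \<phi> * h^(j+k+1) * B k * tilde_seq M j"
    by (simp add: Q_def ac_simps)
  finally show ?thesis .
qed

lemma weight_step_le:
  fixes a b :: "nat \<Rightarrow> real"
  assumes h: "1 \<le> h" and a: "mono a" "\<And>n. 0 \<le> a n" and b: "mono b" "\<And>n. 0 \<le> b n"
  shows "real p * (h^(p - 1 + q + j) * fact (p - 1) * (a (p - 1) * b (j + q)))
           \<le> h^(p + q + Suc j) * fact p * (a p * b (Suc j + q))"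
proof (cases p)
  case 0
  then show ?thesis using h a b by simp
next
  case (Suc p')
  have hp: "h^(p' + q + j) \<le> h^(p + q + Suc j)" using h Suc by (intro power_increasing) auto
  have ab: "a p' * b (j + q) \<le> a p * b (Suc j + q)"
    using Suc a b by (intro mult_mono monoD[of a] monoD[of b]) auto
  have "h^(p' + q + j) * (a p' * b (j + q)) \<le> h^(p + q + Suc j) * (a p * b (Suc j + q))"
    by (rule mult_mono[OF hp ab]) (use h a b in auto)
  then have "fact p * (h^(p' + q + j) * (a p' * b (j + q)))
      \<le> fact p * (h^(p + q + Suc j) * (a p * b (Suc j + q)))"
    by (rule mult_left_mono) simp
  then show ?thesis using Suc by (simp add: ac_simps)
qed

text \<open>The Leibniz step lowers the index of the derivative, so A and tilde M enter through their
  running maxima.\<close>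
lemma deriv_moment_funpow_times_x_le:
  assumes M: "weight_sequence M" and A: "\<And>p. A p > 0" and h: "1 \<le> h"
    and \<phi>: "in_S M (hat_seq A) h \<phi>"
  shows "deriv_moment j p ((times_x ^^ q) \<phi>) \<le> 2 * S_norm M (hat_seq A) h \<phi> * h * 2^q
           * (h^(p+q+j) * fact p * (running_max A p * running_max (tilde_seq M) (j+q)))"
proof -
  define K where "K = 2 * S_norm M (hat_seq A) h \<phi> * h"
  define W where "W j p q = h^(p+q+j) * fact p * (running_max A p * running_max (tilde_seq M) (j+q))"
    for j p q
  have pos: "\<And>p. M p > 0" "\<And>p. hat_seq A p > 0" "h > 0"
    using weight_sequence_pos[OF M] hat_seq_pos[OF A] h by simp_all
  have K: "0 \<le> K" unfolding K_def using S_norm_nonneg[OF \<phi> pos] pos(3) by simp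
  have max: "mono (running_max c)" "\<And>n. 0 \<le> running_max c n" if "\<And>n. c n > 0" for c
    using that running_max_pos[of c] by (auto simp: mono_def running_max_mono less_imp_le)
  note max_A = max[of A, OF A] and max_M = max[of "tilde_seq M", OF tilde_seq_pos[OF M]]
  have rd: "rapidly_decreasing \<phi>" by (rule in_S_rapidly_decreasing[OF \<phi> pos])
  have "deriv_moment j p ((times_x ^^ q) \<phi>) \<le> K * 2^q * W j p q" for j p
  proof (induction q arbitrary: j p)
    case 0
    have "deriv_moment j p \<phi> \<le> (K * h^(p+j) * fact p) * (A p * tilde_seq M j)"
      using deriv_moment_le_tilde_seq[OF M pos(2,3) \<phi>, of j p]
      by (simp add: K_def hat_seq_def ac_simps)
    also have "\<dots> \<le> (K * h^(p+j) * fact p) * (running_max A p * running_max (tilde_seq M) j)"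
      using A[of p] tilde_seq_pos[OF M, of j] max_A(2) max_M(2) K pos(3)
      by (intro mult_left_mono mult_mono running_max_ge) simp_all
    finally show ?case by (simp add: W_def ac_simps)
  next
    case (Suc q)
    let ?g = "(times_x ^^ q) \<phi>"
    have "deriv_moment j p ((times_x ^^ Suc q) \<phi>)
        \<le> deriv_moment (Suc j) p ?g + real p * deriv_moment j (p - 1) ?g"
      using deriv_moment_times_x_le[OF rapidly_decreasing_funpow_times_x[OF rd]] by simp
    also have "\<dots> \<le> K * 2^q * W (Suc j) p q + real p * (K * 2^q * W j (p - 1) q)"
      using Suc.IH by (intro add_mono mult_left_mono) auto
    also have "real p * (K * 2^q * W j (p - 1) q) \<le> K * 2^q * W (Suc j) p q"
      using weight_step_le[OF h max_A max_M, of p q j] K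
      by (simp add: W_def mult.left_commute[of "real p"] mult_left_mono)
    finally show ?case by (simp add: W_def algebra_simps)
  qed
  then show ?thesis by (simp add: K_def W_def)
qed

section \<open>Continuity of the Fourier transform\<close>

lemma power_mult_le_power_add:
  fixes x y :: real
  assumes "1 \<le> x" "1 \<le> y"
  shows "x^p * y^q \<le> (x * y)^(p + q)"
proof -
  have "1 \<le> x^q" "1 \<le> y^p" using assms by (simp_all add: one_le_power)
  then have "1 * 1 \<le> x^q * y^p" by (intro mult_mono) auto
  then have "x^p * y^q * 1 \<le> x^p * y^q * (x^q * y^p)" using assms by (intro mult_left_mono) auto
  also have "\<dots> = (x * y)^(p + q)" by (simp add: power_add power_mult_distrib ac_simps)
  finally show ?thesis by simp
qed

lemma scaled_fourier_weighted_le: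
  assumes M: "weight_sequence M" and A: "\<And>p. A p > 0" and h: "1 \<le> h"
    and \<phi>: "in_S M (hat_seq A) h \<phi>" and s: "\<bar>s\<bar> = 1" and c: "norm c \<le> 1"
    and A_max: "0 < DA" "1 \<le> LA" "\<And>p. running_max A p \<le> DA * LA^p * A p"
    and M_max: "0 < DM" "1 \<le> LM" "\<And>q. running_max (tilde_seq M) q \<le> DM * LM^q * tilde_seq M q"
  shows "\<bar>\<xi>\<bar>^p * norm (iter_deriv q (\<lambda>\<xi>. c * scaled_fourier s \<phi> \<xi>) \<xi>)
           \<le> (2 * h * DA * DM * S_norm M (hat_seq A) h \<phi>)
              * ((LA * (2 * LM) * h)^(p+q) * hat_seq A p * tilde_seq M q)"
proof -
  define N where "N = S_norm M (hat_seq A) h \<phi>"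
  have pos: "\<And>p. M p > 0" "\<And>p. hat_seq A p > 0" "h > 0"
    using weight_sequence_pos[OF M] hat_seq_pos[OF A] h by simp_all
  have N: "0 \<le> N" unfolding N_def by (rule S_norm_nonneg[OF \<phi> pos])
  have rd: "rapidly_decreasing \<phi>" by (rule in_S_rapidly_decreasing[OF \<phi> pos])
  have "\<bar>\<xi>\<bar>^p * norm (iter_deriv q (\<lambda>\<xi>. c * scaled_fourier s \<phi> \<xi>) \<xi>)
      \<le> \<bar>\<xi>\<bar>^p * norm (iter_deriv q (scaled_fourier s \<phi>) \<xi>)"
    unfolding smooth_fun_cmult(2)[OF smooth_fun_scaled_fourier(1)[OF rd]] norm_mult
    using c by (intro mult_left_mono mult_left_le_one_le) auto
  also have "\<dots> \<le> deriv_moment 0 p ((times_x ^^ q) \<phi>)"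
    by (rule scaled_fourier_weighted_le_deriv_moment[OF rd s])
  also have "\<dots> \<le> 2 * N * h * 2^q
      * (h^(p+q+0) * fact p * (running_max A p * running_max (tilde_seq M) (0+q)))"
    unfolding N_def by (rule deriv_moment_funpow_times_x_le[OF M A h \<phi>])
  also have "\<dots> \<le> 2 * N * h * 2^q
      * (h^(p+q+0) * fact p * ((DA * LA^p * A p) * (DM * LM^q * tilde_seq M q)))"
    using N pos(3) A[of p] tilde_seq_pos[OF M, of q] running_max_pos[of A p]
      running_max_pos[of "tilde_seq M" q] A_max M_max
    by (intro mult_left_mono mult_mono) simp_all
  also have "\<dots> = (2 * h * DA * DM * N)
      * ((h^(p+q) * (LA^p * (2 * LM)^q)) * hat_seq A p * tilde_seq M q)"
    by (simp add: hat_seq_def power_mult_distrib ac_simps)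
  also have "\<dots> \<le> (2 * h * DA * DM * N) * ((LA * (2 * LM) * h)^(p+q) * hat_seq A p * tilde_seq M q)"
  proof -
    have "h^(p+q) * (LA^p * (2 * LM)^q) \<le> h^(p+q) * (LA * (2 * LM))^(p+q)"
      using pos(3) A_max M_max by (intro mult_left_mono power_mult_le_power_add) simp_all
    then show ?thesis
      using N pos(3) less_imp_le[OF pos(2)] A_max(1) M_max(1) tilde_seq_pos[OF M, of q]
      by (intro mult_left_mono mult_right_mono) (simp_all add: power_mult_distrib ac_simps)
  qed
  finally show ?thesis unfolding N_def .
qed

lemma maps_continuously_scaled_fourier:
  assumes M: "weight_sequence M" and T: "almost_increasing_geom (tilde_seq M)"
    and A: "\<And>p. A p > 0" "almost_increasing_geom A" and c: "norm c \<le> 1" and s: "\<bar>s\<bar> = 1"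
  shows "maps_continuously (\<lambda>\<phi> \<xi>. c * scaled_fourier s \<phi> \<xi>) M (hat_seq A) (hat_seq A) (tilde_seq M)"
proof -
  obtain DA LA where A_max: "0 < DA" "1 \<le> LA" "\<And>p. running_max A p \<le> DA * LA^p * A p"
    using running_max_le_geom[OF A(2)] by blast
  obtain DM LM where M_max:
    "0 < DM" "1 \<le> LM" "\<And>q. running_max (tilde_seq M) q \<le> DM * LM^q * tilde_seq M q"
    using running_max_le_geom[OF T] by blast
  have pos: "\<And>p. M p > 0" "\<And>p. hat_seq A p > 0" "\<And>p. tilde_seq M p > 0"
    using weight_sequence_pos[OF M] hat_seq_pos[OF A(1)] tilde_seq_pos[OF M] by simp_all
  show ?thesis
  proof (rule maps_continuouslyI[OF pos(1,2)])
    show "0 < LA * (2 * LM)" using A_max M_max by simp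
    fix h :: real assume h: "1 \<le> h"
    have "in_S (hat_seq A) (tilde_seq M) (LA * (2 * LM) * h) (\<lambda>\<xi>. c * scaled_fourier s \<phi> \<xi>)
      \<and> S_norm (hat_seq A) (tilde_seq M) (LA * (2 * LM) * h) (\<lambda>\<xi>. c * scaled_fourier s \<phi> \<xi>)
          \<le> (2 * h * DA * DM) * S_norm M (hat_seq A) h \<phi>"
      if \<phi>: "in_S M (hat_seq A) h \<phi>" for \<phi>
    proof -
      have "rapidly_decreasing \<phi>" using in_S_rapidly_decreasing[OF \<phi>] pos h by simp
      then have "smooth_fun (\<lambda>\<xi>. c * scaled_fourier s \<phi> \<xi>)"
        by (intro smooth_fun_cmult(1) smooth_fun_scaled_fourier(1))
      moreover have "0 < LA * (2 * LM) * h" using A_max M_max h by simp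
      ultimately show ?thesis
        using in_S_S_norm_leI[where N="hat_seq A" and B="tilde_seq M", OF pos(2,3)]
          scaled_fourier_weighted_le[OF M A(1) h \<phi> s c A_max M_max] by blast
    qed
    then show "\<exists>C. \<forall>\<phi>. in_S M (hat_seq A) h \<phi> \<longrightarrow>
        in_S (hat_seq A) (tilde_seq M) (LA * (2 * LM) * h) (\<lambda>\<xi>. c * scaled_fourier s \<phi> \<xi>) \<and>
        S_norm (hat_seq A) (tilde_seq M) (LA * (2 * LM) * h) (\<lambda>\<xi>. c * scaled_fourier s \<phi> \<xi>)
          \<le> C * S_norm M (hat_seq A) h \<phi>"
      by blast
  qed
qed

theorem proposition4p2:
  fixes M A :: "nat \<Rightarrow> real"
  assumes "weight_sequence M"
    and "almost_increasing (tilde_seq M)"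
    and "\<forall>p. A p > 0"
    and "almost_increasing A \<or>
         (liminf (\<lambda>p. ereal (root p (A p))) > 0 \<and> alg_cond (hat_seq A))"
  shows "maps_continuously fourier M (hat_seq A) (hat_seq A) (tilde_seq M)
       \<and> maps_continuously inv_fourier M (hat_seq A) (hat_seq A) (tilde_seq M)"
proof -
  have A: "\<And>p. A p > 0" using assms(3) by blast
  have "almost_increasing_geom A"
    using assms(4) almost_increasing_imp_geom almost_increasing_geom_of_alg_cond[of A, OF A] by blast
  note maps =
    maps_continuously_scaled_fourier[OF assms(1) almost_increasing_imp_geom[OF assms(2)] A this]
  have "fourier = (\<lambda>\<phi> \<xi>. 1 * scaled_fourier 1 \<phi> \<xi>)"
    by (simp add: fun_eq_iff fourier_def scaled_fourier_def)
  moreover have "inv_fourier = (\<lambda>\<phi> \<xi>. of_real (1 / (2 * pi)) * scaled_fourier (-1) \<phi> \<xi>)"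
    by (simp add: fun_eq_iff inv_fourier_def fourier_def scaled_fourier_def field_simps)
  moreover have "norm (of_real (1 / (2 * pi)) :: complex) \<le> 1"
    unfolding norm_of_real using pi_gt3 by (simp add: field_simps)
  ultimately show ?thesis using maps[of 1 1] maps[of "of_real (1 / (2 * pi))" "-1"] by simp
qed

end
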